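(* Let $\mathcal{G}_T$ be a planar graph with an isoradial embedding, $\mathcal{G}_D$ its superposition with its dual, $\bar\partial$ the matrix on $\mathcal{G}_D$ and $\bar D=S\bar\partial S$ as described below. Then for vertices $b,b'$ of $\mathcal{G}_T$ we have $(\bar D^*\bar D)(b,b')=\Delta_{\mathcal{G}_T}(b,b')$, and for vertices $b,b'$ of $\mathcal{G}_T^*$ (faces of $\mathcal{G}_T$) we have $(\bar D^*\bar D)(b,b')=\Delta_{\mathcal{G}_T^*}(b,b')$.
   Context: An isoradial embedding of a planar graph is an embedding in which every face is inscribed in a circle of a common radius, with center in the closure of the face; the dual $\mathcal{G}_T^*$ is embedded with vertices at the circumcenters. Each edge $e$ of $\mathcal{G}_T$ has a rhombus with vertices the endpoints of $e$ and of $e^*$; its half-angle $\theta(e)\in[0,\pi/2]$ is half its angle at the endpoints of $e$. $\Delta_{\mathcal{G}_T}$ is the Laplacian $\Delta f(u)=\sum_{w\sim u}c(uw)(f(u)-f(w))$ with conductances $c(e)=\tan\theta(e)$, and $\Delta_{\mathcal{G}_T^*}$ the Laplacian on $\mathcal{G}_T^*$ with conductances $c(e^* )=\tan(\pi/2-\theta(e))$. The graph $\mathcal{G}_D$ has a black vertex for each vertex and each face of $\mathcal{G}_T$, a white vertex $w_e$ for each edge $e$ of $\mathcal{G}_T$ (placed at the intersection of $e$ and $e^*$), and $w_e$ is joined to the two endpoints of $e$ and the two endpoints of $e^*$. Scaling so that $\mathcal{G}_D$ is isoradial with radius $1$, each rhombus of $\mathcal{G}_T$ of half-angle $\theta$ is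 divided into four congruent rhombi of $\mathcal{G}_D$, two of half-angle $\theta$ (for the half-edges of $e$) and two of half-angle $\pi/2-\theta$ (for the half-edges of $e^*$). On $\mathcal{G}_D$, $\bar\partial$ is the symmetric matrix, zero on non-adjacent pairs, with $\bar\partial(w,b)=\bar\partial(b,w)=i(x-y)$ where the rhombus of edge $wb$ has vertices $w,x,b,y$ in counterclockwise order (so $|\bar\partial|=2\sin\theta$ on primal half-edges and $2\cos\theta$ on dual half-edges). $S$ is diagonal with $S(b,b)=1$ for black $b$ and $S(w_e,w_e)=1/(2\sqrt{\sin\theta(e)\cos\theta(e)})$, and $\bar D=S\bar\partial S$; $\bar D^*$ is the conjugate transpose. *)

theory Defs
  imports "HOL-Analysis.Analysis"
begin

text \<open>Vertices of G_T: type 'v (set Vs); faces of G_T = vertices of the dual: type 'f (set Fs);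
  edges: type 'e (set Es).  Edge e is oriented from src e to tgt e; lft e / rgt e are the
  faces on its left / right.  posn gives the positions of the vertices, ctr the
  circumcenters of the faces, rad the common radius.\<close>

record ('v, 'f, 'e) iso_graph =
  Vs   :: "'v set"
  Fs   :: "'f set"
  Es   :: "'e set"
  posn :: "'v \<Rightarrow> complex"
  ctr  :: "'f \<Rightarrow> complex"
  src  :: "'e \<Rightarrow> 'v"
  tgt  :: "'e \<Rightarrow> 'v"
  lft  :: "'e \<Rightarrow> 'f"
  rgt  :: "'e \<Rightarrow> 'f"
  rad  :: real

text \<open>Isoradial embedding: every face is inscribed in a circle of radius rad around its
  circumcenter; for each edge e the rhombus src e, ctr (rgt e), tgt e, ctr (lft e) is in
  counterclockwise order (left face on the left of the oriented edge, right face on the right,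
  possibly degenerate); the graph is locally finite.\<close>

definition isoradial_embedding :: "('v, 'f, 'e) iso_graph \<Rightarrow> bool" where
  "isoradial_embedding G \<longleftrightarrow>
     rad G > 0 \<and> inj_on (posn G) (Vs G) \<and>
     (\<forall>e\<in>Es G. src G e \<in> Vs G \<and> tgt G e \<in> Vs G \<and> lft G e \<in> Fs G \<and> rgt G e \<in> Fs G \<and>
        src G e \<noteq> tgt G e \<and>
        cmod (posn G (src G e) - ctr G (lft G e)) = rad G \<and>
        cmod (posn G (tgt G e) - ctr G (lft G e)) = rad G \<and>
        cmod (posn G (src G e) - ctr G (rgt G e)) = rad G \<and>
        cmod (posn G (tgt G e) - ctr G (rgt G e)) = rad G \<and>
        Im (cnj (posn G (tgt G e) - posn G (src G e)) * (ctr G (lft G e) - posn G (src G e))) \<ge> 0 \<and>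
        Im (cnj (posn G (tgt G e) - posn G (src G e)) * (ctr G (rgt G e) - posn G (src G e))) \<le> 0) \<and>
     (\<forall>v\<in>Vs G. finite {e\<in>Es G. src G e = v \<or> tgt G e = v}) \<and>
     (\<forall>f\<in>Fs G. finite {e\<in>Es G. lft G e = f \<or> rgt G e = f})"

text \<open>Half-angle theta(e): half of the angle of the rhombus of e at its endpoint src e,
  i.e. half the (counterclockwise) angle from ctr (rgt e) - src e to ctr (lft e) - src e.\<close>

definition half_angle :: "('v, 'f, 'e) iso_graph \<Rightarrow> 'e \<Rightarrow> real" where
  "half_angle G e =
     Arg ((ctr G (lft G e) - posn G (src G e)) / (ctr G (rgt G e) - posn G (src G e))) / 2"

definition cond :: "('v, 'f, 'e) iso_graph \<Rightarrow> 'e \<Rightarrow> real" where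
  "cond G e = tan (half_angle G e)"

definition cond_dual :: "('v, 'f, 'e) iso_graph \<Rightarrow> 'e \<Rightarrow> real" where
  "cond_dual G e = tan (pi / 2 - half_angle G e)"

definition lap_T :: "('v, 'f, 'e) iso_graph \<Rightarrow> ('v \<Rightarrow> real) \<Rightarrow> 'v \<Rightarrow> real" where
  "lap_T G h u = (\<Sum>e\<in>{e\<in>Es G. src G e = u \<or> tgt G e = u}.
      cond G e * (h u - h (if src G e = u then tgt G e else src G e)))"

definition lap_D :: "('v, 'f, 'e) iso_graph \<Rightarrow> ('f \<Rightarrow> real) \<Rightarrow> 'f \<Rightarrow> real" where
  "lap_D G h f = (\<Sum>e\<in>{e\<in>Es G. lft G e = f \<or> rgt G e = f}.
      cond_dual G e * (h f - h (if lft G e = f then rgt G e else lft G e)))"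

definition lap_T_mat :: "('v, 'f, 'e) iso_graph \<Rightarrow> 'v \<Rightarrow> 'v \<Rightarrow> real" where
  "lap_T_mat G b b' = lap_T G (\<lambda>x. if x = b' then 1 else 0) b"

definition lap_D_mat :: "('v, 'f, 'e) iso_graph \<Rightarrow> 'f \<Rightarrow> 'f \<Rightarrow> real" where
  "lap_D_mat G b b' = lap_D G (\<lambda>x. if x = b' then 1 else 0) b"

text \<open>The superposition graph G_D.  Vertices: type ('v + 'f) + 'e; black vertices are
  Inl (Inl v) (vertices of G_T) and Inl (Inr f) (faces of G_T), white vertices are Inr e.\<close>

type_synonym ('v, 'f, 'e) gd_vertex = "('v + 'f) + 'e"

definition GD_vertices :: "('v, 'f, 'e) iso_graph \<Rightarrow> ('v, 'f, 'e) gd_vertex set" where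
  "GD_vertices G = Inl ` (Inl ` Vs G \<union> Inr ` Fs G) \<union> Inr ` Es G"

text \<open>Embedding of G_D, scaled so that G_D is isoradial with radius 1 (i.e. G_T has
  radius 2 after scaling by 2 / rad).\<close>

definition scl :: "('v, 'f, 'e) iso_graph \<Rightarrow> complex \<Rightarrow> complex" where
  "scl G z = complex_of_real (2 / rad G) * z"

definition midp :: "complex \<Rightarrow> complex \<Rightarrow> complex" where
  "midp a b = (a + b) / 2"

text \<open>The four half-edges of G_D at the white vertex w_e, each given as
  (black endpoint b, x, y) where the rhombus of the half-edge w_e b has vertices
  w_e, x, b, y in counterclockwise order (x, y are midpoints of sides of the rhombus of e,
  i.e. circumcenters of faces of G_D).\<close>

definition GD_half_edges :: "('v, 'f, 'e) iso_graph \<Rightarrow> 'e \<Rightarrow>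
    (('v + 'f) \<times> complex \<times> complex) list" where
  "GD_half_edges G e =
     (let u  = scl G (posn G (src G e)); u' = scl G (posn G (tgt G e));
          fl = scl G (ctr G (lft G e)); fr = scl G (ctr G (rgt G e))
      in [ (Inl (src G e), midp u fl,  midp u fr),
           (Inl (tgt G e), midp u' fr, midp u' fl),
           (Inr (rgt G e), midp fr u,  midp fr u'),
           (Inr (lft G e), midp fl u', midp fl u) ])"

text \<open>dbar(w,b) = dbar(b,w) = i (x - y); zero on non-adjacent pairs (entries of parallel
  half-edges are added).\<close>

definition dbar_wb :: "('v, 'f, 'e) iso_graph \<Rightarrow> 'e \<Rightarrow> 'v + 'f \<Rightarrow> complex" where
  "dbar_wb G e b =
     (if e \<in> Es G then
        sum_list (map (\<lambda>(b', x, y). \<i> * (x - y)) (filter (\<lambda>(b', x, y). b' = b) (GD_half_edges G e)))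
      else 0)"

definition dbar :: "('v, 'f, 'e) iso_graph \<Rightarrow> ('v, 'f, 'e) gd_vertex \<Rightarrow> ('v, 'f, 'e) gd_vertex \<Rightarrow> complex" where
  "dbar G p q = (case (p, q) of
       (Inr e, Inl b) \<Rightarrow> dbar_wb G e b
     | (Inl b, Inr e) \<Rightarrow> dbar_wb G e b
     | _ \<Rightarrow> 0)"

definition Smat :: "('v, 'f, 'e) iso_graph \<Rightarrow> ('v, 'f, 'e) gd_vertex \<Rightarrow> complex" where
  "Smat G p = (case p of
       Inl b \<Rightarrow> 1
     | Inr e \<Rightarrow> complex_of_real (1 / (2 * sqrt (sin (half_angle G e) * cos (half_angle G e)))))"

definition Dbar :: "('v, 'f, 'e) iso_graph \<Rightarrow> ('v, 'f, 'e) gd_vertex \<Rightarrow> ('v, 'f, 'e) gd_vertex \<Rightarrow> complex" where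
  "Dbar G p q = Smat G p * dbar G p q * Smat G q"

text \<open>(Dbar^* Dbar)(p,q) = sum over x of conj(Dbar(x,p)) Dbar(x,q); the sum is finitely
  supported by local finiteness.\<close>

definition DstarD :: "('v, 'f, 'e) iso_graph \<Rightarrow> ('v, 'f, 'e) gd_vertex \<Rightarrow> ('v, 'f, 'e) gd_vertex \<Rightarrow> complex" where
  "DstarD G p q = (\<Sum>\<^sub>\<infinity>x\<in>GD_vertices G. cnj (Dbar G x p) * Dbar G x q)"

end

theory Submission
  imports Defs
begin

text \<open>For black vertices b, b' the entry (D^* D)(b, b') is a sum over the white vertices w_e
  adjacent to b, i.e. over the edges e incident to b.  The two endpoints of e (resp. the two faces
  beside it) receive opposite entries D(w_e, .) of common modulus, so each e contributes
  |D(w_e, b)|^2 times the Laplacian stencil of e.  In the rhombus of e (side r, half-angle theta)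
  the dual diagonal has length 2 r sin theta and the primal one 2 r cos theta; after the scaling
  by 2/r and the factor S(w_e) = 1/(2 sqrt(sin theta cos theta)) the squared moduli are exactly
  tan theta and cot theta.\<close>

definition incidence :: "'a \<Rightarrow> 'a \<Rightarrow> 'a \<Rightarrow> real" where
  "incidence x y v = of_bool (x = v) - of_bool (y = v)"

text \<open>No hypothesis x \<noteq> y: a loop contributes 0 on both sides, as needed for an edge
  with the same face on both of its sides.\<close>

lemma incidence_mult_incidence:
  assumes "x = b \<or> y = b"
  shows "incidence x y b * incidence x y b' = of_bool (b = b') - of_bool ((if x = b then y else x) = b')"
  using assms by (auto simp: incidence_def)

lemma norm_diff_square_complex:
  fixes z d :: complex
  shows "(cmod (z - d))\<^sup>2 = (cmod z)\<^sup>2 - 2 * Re (cnj d * z) + (cmod d)\<^sup>2"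
  unfolding cmod_power2 by (simp add: power2_eq_square algebra_simps)

lemma rhombus_diagonal:
  fixes z w d :: complex
  assumes "cmod z = cmod (z - d)" "cmod w = cmod (w - d)" "cmod z = cmod w" "d \<noteq> 0"
    and "Im (cnj d * z) \<ge> 0" "Im (cnj d * w) \<le> 0"
  shows "z + w = d" "Im (z * cnj w) \<ge> 0"
proof -
  have Re_eq: "Re (cnj d * z) = (cmod d)\<^sup>2 / 2" "Re (cnj d * w) = (cmod d)\<^sup>2 / 2"
    using assms(1,2) norm_diff_square_complex[of z d] norm_diff_square_complex[of w d] by simp_all
  have "(cmod (cnj d * z))\<^sup>2 = (cmod (cnj d * w))\<^sup>2"
    using assms(3) by (simp add: norm_mult)
  then have "(Im (cnj d * z))\<^sup>2 = (Im (cnj d * w))\<^sup>2"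
    using Re_eq by (simp only: cmod_power2)
  then have Im_eq: "Im (cnj d * w) = - Im (cnj d * z)"
    using assms(5,6) by (smt (verit) power2_eq_iff)
  have "cnj d * z + cnj d * w = of_real ((cmod d)\<^sup>2)"
    using Re_eq Im_eq by (simp add: complex_eq_iff)
  then have "cnj d * (z + w) = cnj d * d"
    by (metis complex_norm_square distrib_left mult.commute)
  then show "z + w = d"
    using assms(4) by simp
  then have "Im (z * cnj w) = Im (cnj d * z)"
    by (auto simp: algebra_simps)
  then show "Im (z * cnj w) \<ge> 0"
    using assms(5) by simp
qed

lemma norm_cis_double_minus_one: "cmod (cis (2 * t) - 1) = 2 * \<bar>sin t\<bar>"
proof -
  have "(cmod (cis (2 * t) - 1))\<^sup>2 = 2 - 2 * cos (2 * t)"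
    unfolding cmod_power2 using sin_cos_squared_add[of "2 * t"] by (simp add: power2_diff)
  also have "\<dots> = (2 * \<bar>sin t\<bar>)\<^sup>2"
    by (simp add: cos_double_sin power_mult_distrib)
  finally show ?thesis
    by (rule power2_eq_imp_eq) simp_all
qed

lemma norm_cis_double_plus_one: "cmod (cis (2 * t) + 1) = 2 * \<bar>cos t\<bar>"
proof -
  have "(cmod (cis (2 * t) + 1))\<^sup>2 = 2 + 2 * cos (2 * t)"
    unfolding cmod_power2 using sin_cos_squared_add[of "2 * t"] by (simp add: power2_sum)
  also have "\<dots> = (2 * \<bar>cos t\<bar>)\<^sup>2"
    by (simp add: cos_double_cos power_mult_distrib)
  finally show ?thesis
    by (rule power2_eq_imp_eq) simp_all
qed

lemma chord_norms_half_Arg: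
  fixes z w :: complex
  assumes "cmod z = cmod w" "w \<noteq> 0" "Im (z * cnj w) \<ge> 0"
  defines "t \<equiv> Arg (z / w) / 2"
  shows "cmod (z - w) = 2 * cmod w * sin t" "cmod (z + w) = 2 * cmod w * cos t"
    and "0 \<le> t" "t \<le> pi / 2"
proof -
  have "0 \<le> Arg (z / w)" "Arg (z / w) \<le> pi"
    using assms(3) by (simp_all add: Arg_less_0 Im_complex_div_ge_0 Arg_le_pi)
  then show t_bounds: "0 \<le> t" "t \<le> pi / 2"
    by (simp_all add: t_def)
  have "z \<noteq> 0"
    using assms(1,2) by (metis norm_eq_zero)
  then have "z / w \<noteq> 0" "cmod (z / w) = 1"
    using assms(1,2) by (simp_all add: norm_divide)
  then have "z / w = cis (2 * t)"
    by (simp add: t_def cis_Arg sgn_div_norm)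
  then have "z - w = w * (cis (2 * t) - 1)" "z + w = w * (cis (2 * t) + 1)"
    using assms(2) by (simp_all add: field_simps)
  moreover have "0 \<le> sin t" "0 \<le> cos t"
    using t_bounds by (simp_all add: sin_ge_zero cos_ge_zero)
  ultimately show "cmod (z - w) = 2 * cmod w * sin t" "cmod (z + w) = 2 * cmod w * cos t"
    by (simp_all add: norm_mult norm_cis_double_minus_one norm_cis_double_plus_one)
qed

lemma isoradial_rhombus:
  assumes "isoradial_embedding G" "e \<in> Es G"
  shows "cmod (ctr G (lft G e) - ctr G (rgt G e)) = 2 * rad G * sin (half_angle G e)"
    and "cmod (posn G (tgt G e) - posn G (src G e)) = 2 * rad G * cos (half_angle G e)"
    and "0 \<le> half_angle G e" "half_angle G e \<le> pi / 2"
proof -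
  define u u' fl fr where rhombus_defs: "u = posn G (src G e)" "u' = posn G (tgt G e)"
    "fl = ctr G (lft G e)" "fr = ctr G (rgt G e)"
  have rad: "rad G > 0" and endpoints: "src G e \<in> Vs G" "tgt G e \<in> Vs G" "src G e \<noteq> tgt G e"
    and circ: "cmod (u - fl) = rad G" "cmod (u' - fl) = rad G" "cmod (u - fr) = rad G" "cmod (u' - fr) = rad G"
    and sides: "Im (cnj (u' - u) * (fl - u)) \<ge> 0" "Im (cnj (u' - u) * (fr - u)) \<le> 0"
    using assms unfolding isoradial_embedding_def rhombus_defs by auto
  have "u' \<noteq> u"
    using assms(1) endpoints by (auto simp: rhombus_defs isoradial_embedding_def dest: inj_onD)
  then have diag: "(fl - u) + (fr - u) = u' - u" and orient: "Im ((fl - u) * cnj (fr - u)) \<ge> 0"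
    using rhombus_diagonal[of "fl - u" "u' - u" "fr - u"] circ sides by (simp_all add: norm_minus_commute)
  have "fr - u \<noteq> 0"
    using circ rad by auto
  moreover have half_angle_eq: "half_angle G e = Arg ((fl - u) / (fr - u)) / 2"
    by (simp add: half_angle_def rhombus_defs)
  ultimately show "cmod (fl - fr) = 2 * rad G * sin (half_angle G e)"
    and "cmod (u' - u) = 2 * rad G * cos (half_angle G e)"
    and "0 \<le> half_angle G e" "half_angle G e \<le> pi / 2"
    using chord_norms_half_Arg[of "fl - u" "fr - u", folded half_angle_eq] circ orient diag
    by (simp_all add: norm_minus_commute)
qed

text \<open>For a degenerate rhombus (t = 0 or t = pi/2) both sides vanish, because s and the
  relevant tangent are then quotients by 0.\<close>

lemma rhombus_weights:
  fixes t :: real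
  assumes "0 \<le> t" "t \<le> pi / 2"
  defines "s \<equiv> 1 / (2 * sqrt (sin t * cos t))"
  shows "(s * (2 * sin t))\<^sup>2 = tan t" "(s * (2 * cos t))\<^sup>2 = tan (pi / 2 - t)"
proof -
  have "0 \<le> sin t * cos t"
    using assms(1,2) by (simp add: sin_ge_zero cos_ge_zero)
  then have s2: "s\<^sup>2 = 1 / (4 * (sin t * cos t))"
    by (simp add: s_def power_divide power_mult_distrib)
  have "(s * (2 * sin t))\<^sup>2 = sin t / cos t"
    unfolding power_mult_distrib s2 by (cases "sin t = 0") (simp_all add: power2_eq_square)
  moreover have "(s * (2 * cos t))\<^sup>2 = cos t / sin t"
    unfolding power_mult_distrib s2 by (cases "cos t = 0") (simp_all add: power2_eq_square)
  ultimately show "(s * (2 * sin t))\<^sup>2 = tan t" "(s * (2 * cos t))\<^sup>2 = tan (pi / 2 - t)"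
    by (simp_all add: tan_def sin_diff cos_diff)
qed

lemma dbar_wb_vertex:
  "e \<in> Es G \<Longrightarrow> dbar_wb G e (Inl v) =
     of_real (incidence (src G e) (tgt G e) v) * (\<i> * (ctr G (lft G e) - ctr G (rgt G e)) / rad G)"
  by (cases "rad G = 0") (auto simp: dbar_wb_def GD_half_edges_def Let_def midp_def scl_def incidence_def field_simps)

lemma dbar_wb_face:
  "e \<in> Es G \<Longrightarrow> dbar_wb G e (Inr f) =
     of_real (incidence (lft G e) (rgt G e) f) * (\<i> * (posn G (tgt G e) - posn G (src G e)) / rad G)"
  by (cases "rad G = 0") (auto simp: dbar_wb_def GD_half_edges_def Let_def midp_def scl_def incidence_def field_simps)

lemma Dbar_white_black: "Dbar G (Inr e) (Inl b) = Smat G (Inr e) * dbar_wb G e b"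
  by (simp add: Dbar_def dbar_def Smat_def)

lemma Dbar_black_black: "Dbar G (Inl a) (Inl b) = 0"
  by (simp add: Dbar_def dbar_def)

lemma DstarD_black_eq_sum:
  fixes \<sigma> \<tau> :: "'e \<Rightarrow> real" and \<alpha> :: "'e \<Rightarrow> complex"
  assumes "finite E" "E \<subseteq> Es G"
    and Dbar_p: "\<And>e. e \<in> Es G \<Longrightarrow> Dbar G (Inr e) (Inl p) = of_real (\<sigma> e) * \<alpha> e"
    and Dbar_q: "\<And>e. e \<in> Es G \<Longrightarrow> Dbar G (Inr e) (Inl q) = of_real (\<tau> e) * \<alpha> e"
    and outside: "\<And>e. e \<in> Es G - E \<Longrightarrow> \<sigma> e = 0"
  shows "DstarD G (Inl p) (Inl q) = of_real (\<Sum>e\<in>E. (cmod (\<alpha> e))\<^sup>2 * (\<sigma> e * \<tau> e))"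
proof -
  define F where "F = (\<lambda>x. cnj (Dbar G x (Inl p)) * Dbar G x (Inl q))"
  have F_white: "F (Inr e) = of_real ((cmod (\<alpha> e))\<^sup>2 * (\<sigma> e * \<tau> e))" if "e \<in> Es G" for e
    using Dbar_p[OF that] Dbar_q[OF that] complex_norm_square[of "\<alpha> e"] by (simp add: F_def)
  have "DstarD G (Inl p) (Inl q) = infsum F (Inr ` E)"
    unfolding DstarD_def F_def[symmetric]
    using assms(2) Dbar_p outside
    by (intro infsum_cong_neutral) (auto simp: GD_vertices_def F_def Dbar_black_black image_iff)
  also have "\<dots> = (\<Sum>e\<in>E. F (Inr e))"
    using assms(1) by (simp add: sum.reindex)
  also have "\<dots> = of_real (\<Sum>e\<in>E. (cmod (\<alpha> e))\<^sup>2 * (\<sigma> e * \<tau> e))"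
    using assms(2) F_white by (auto intro: sum.cong)
  finally show ?thesis .
qed

definition Dbar_primal :: "('v, 'f, 'e) iso_graph \<Rightarrow> 'e \<Rightarrow> complex" where
  "Dbar_primal G e = Smat G (Inr e) * (\<i> * (ctr G (lft G e) - ctr G (rgt G e)) / rad G)"

definition Dbar_dual :: "('v, 'f, 'e) iso_graph \<Rightarrow> 'e \<Rightarrow> complex" where
  "Dbar_dual G e = Smat G (Inr e) * (\<i> * (posn G (tgt G e) - posn G (src G e)) / rad G)"

lemma Dbar_white_vertex:
  "e \<in> Es G \<Longrightarrow> Dbar G (Inr e) (Inl (Inl v)) = of_real (incidence (src G e) (tgt G e) v) * Dbar_primal G e"
  by (simp add: Dbar_white_black dbar_wb_vertex Dbar_primal_def)

lemma Dbar_white_face: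
  "e \<in> Es G \<Longrightarrow> Dbar G (Inr e) (Inl (Inr f)) = of_real (incidence (lft G e) (rgt G e) f) * Dbar_dual G e"
  by (simp add: Dbar_white_black dbar_wb_face Dbar_dual_def)

lemma isoradial_norm_Dbar_sq:
  assumes "isoradial_embedding G" "e \<in> Es G"
  shows "(cmod (Dbar_primal G e))\<^sup>2 = cond G e" "(cmod (Dbar_dual G e))\<^sup>2 = cond_dual G e"
proof -
  define t where "t = half_angle G e"
  define s where "s = 1 / (2 * sqrt (sin t * cos t))"
  have "rad G > 0"
    using assms(1) by (simp add: isoradial_embedding_def)
  then have "(cmod (Dbar_primal G e))\<^sup>2 = (s * (2 * sin t))\<^sup>2"
    and "(cmod (Dbar_dual G e))\<^sup>2 = (s * (2 * cos t))\<^sup>2"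
    using isoradial_rhombus(1,2)[OF assms]
    by (simp_all add: Dbar_primal_def Dbar_dual_def Smat_def s_def t_def
        norm_mult norm_divide power_mult_distrib power_divide)
  then show "(cmod (Dbar_primal G e))\<^sup>2 = cond G e" "(cmod (Dbar_dual G e))\<^sup>2 = cond_dual G e"
    using rhombus_weights[of t] isoradial_rhombus(3,4)[OF assms]
    by (simp_all add: cond_def cond_dual_def s_def t_def)
qed

lemma DstarD_vertices_eq_lap_T_mat:
  assumes "isoradial_embedding G" "b \<in> Vs G"
  shows "DstarD G (Inl (Inl b)) (Inl (Inl b')) = of_real (lap_T_mat G b b')"
proof -
  define E where "E = {e \<in> Es G. src G e = b \<or> tgt G e = b}"
  have "finite E"
    using assms by (simp add: isoradial_embedding_def E_def)
  then have "DstarD G (Inl (Inl b)) (Inl (Inl b')) = of_real (\<Sum>e\<in>E.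
      (cmod (Dbar_primal G e))\<^sup>2 * (incidence (src G e) (tgt G e) b * incidence (src G e) (tgt G e) b'))"
    by (rule DstarD_black_eq_sum) (auto simp: E_def Dbar_white_vertex incidence_def)
  also have "\<dots> = of_real (\<Sum>e\<in>E. cond G e *
      (of_bool (b = b') - of_bool ((if src G e = b then tgt G e else src G e) = b')))"
    by (intro arg_cong[where f = of_real] sum.cong refl)
      (simp add: E_def isoradial_norm_Dbar_sq(1)[OF assms(1)] incidence_mult_incidence)
  also have "\<dots> = of_real (lap_T_mat G b b')"
    by (simp add: lap_T_mat_def lap_T_def E_def of_bool_def)
  finally show ?thesis .
qed

lemma DstarD_faces_eq_lap_D_mat:
  assumes "isoradial_embedding G" "b \<in> Fs G"
  shows "DstarD G (Inl (Inr b)) (Inl (Inr b')) = of_real (lap_D_mat G b b')"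
proof -
  define E where "E = {e \<in> Es G. lft G e = b \<or> rgt G e = b}"
  have "finite E"
    using assms by (simp add: isoradial_embedding_def E_def)
  then have "DstarD G (Inl (Inr b)) (Inl (Inr b')) = of_real (\<Sum>e\<in>E.
      (cmod (Dbar_dual G e))\<^sup>2 * (incidence (lft G e) (rgt G e) b * incidence (lft G e) (rgt G e) b'))"
    by (rule DstarD_black_eq_sum) (auto simp: E_def Dbar_white_face incidence_def)
  also have "\<dots> = of_real (\<Sum>e\<in>E. cond_dual G e *
      (of_bool (b = b') - of_bool ((if lft G e = b then rgt G e else lft G e) = b')))"
    by (intro arg_cong[where f = of_real] sum.cong refl)
      (simp add: E_def isoradial_norm_Dbar_sq(2)[OF assms(1)] incidence_mult_incidence)
  also have "\<dots> = of_real (lap_D_mat G b b')"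
    by (simp add: lap_D_mat_def lap_D_def E_def of_bool_def)
  finally show ?thesis .
qed

theorem lemma6p1:
  fixes G :: "('v, 'f, 'e) iso_graph"
  assumes "isoradial_embedding G"
  shows "(\<forall>b\<in>Vs G. \<forall>b'\<in>Vs G.
            DstarD G (Inl (Inl b)) (Inl (Inl b')) = complex_of_real (lap_T_mat G b b'))
       \<and> (\<forall>b\<in>Fs G. \<forall>b'\<in>Fs G.
            DstarD G (Inl (Inr b)) (Inl (Inr b')) = complex_of_real (lap_D_mat G b b'))"
  using DstarD_vertices_eq_lap_T_mat[OF assms] DstarD_faces_eq_lap_D_mat[OF assms] by blast

end
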